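(* Let $B$ be a non-abelian group, $H$ a finitely generated infinite group with fixed finite generating set $X=\{x_1,\dots,x_n\}$, $W=B\wr H$, and fix $a,b\in B$ with $ab\ne ba$. For $S\subseteq H$ define $\bar a,\bar b_S\in B^H$ by $\bar a(1)=a$, $\bar a(x)=1$ for $x\neq1$, and $\bar b_S(x)=b$ for $x\in S$, $\bar b_S(x)=1$ for $x\notin S$; let $G_S\le W$ be generated by $H,\bar a,\bar b_S$ and $Y_S=(x_1,\dots,x_n,\bar a,\bar b_S)$. Let $\xi:2^H\to\mathcal G$, $\xi(S)=(G_S,Y_S)$. Then the restriction of $\xi$ to the subspace $D_R(H)$ of $2^H$ is continuous.
   Context: $B^H$ is the group of all functions $H\to B$ with pointwise multiplication; $B\wr H=B^H\rtimes H$ with $(hfh^{-1})(x)=f(h^{-1}x)$. $2^H$ is the space of all subsets of $H$ with the product topology; $D_R(H)$ is the set of $S\subseteq H$ whose orbit $\{Sh:h\in H\}$ under right multiplication is dense in $2^H$. Space of marked groups: for $m\in\mathbb N$, $\mathcal G_m$ is the set of pairs $(G,A)$, $G$ a group and $A=(a_1,\dots,a_m)$ an ordered generating tuple, modulo $(G,(a_i))\approx(G',(a'_i))$ iff $a_i\mapsto a'_i$ extends to an isomorphism. $(G,A)\approx_r(G',A')$ means there is a labeled directed graph isomorphism between the radius-$r$ balls about the identity in the Cayley graphs, sending $a_i$-edges to $a'_i$-edges. The topology on $\mathcal G_m$ has basis $\{(G',A')\in\mathcal G_m:(G',A')\approx_r(G,A)\}$, $r\in\mathbb N$; $\mathcal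 G_m\subseteq\mathcal G_{m+1}$ via $(G,(a_1,\dots,a_m))\mapsto(G,(a_1,\dots,a_m,1))$, and $\mathcal G=\bigcup_m\mathcal G_m$ carries the union topology. *)

theory Defs
  imports "HOL-Algebra.Algebra" "HOL-Library.FuncSet"
begin

text \<open>The product is (f,h)(g,k) = (f * (h.g), hk) with (h.g)(x) = g(h^-1 x),
  i.e. the conjugation action h f h^-1 (x) = f(h^-1 x).\<close>

definition wreath :: "('b, 'c) monoid_scheme \<Rightarrow> ('h, 'd) monoid_scheme \<Rightarrow> (('h \<Rightarrow> 'b) \<times> 'h) monoid"
  where "wreath B H =
    \<lparr> carrier = (carrier H \<rightarrow>\<^sub>E carrier B) \<times> carrier H,
      monoid.mult = (\<lambda>(f, h) (g, k). (\<lambda>x\<in>carrier H. f x \<otimes>\<^bsub>B\<^esub> g (inv\<^bsub>H\<^esub> h \<otimes>\<^bsub>H\<^esub> x), h \<otimes>\<^bsub>H\<^esub> k)),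
      monoid.one = (\<lambda>x\<in>carrier H. \<one>\<^bsub>B\<^esub>, \<one>\<^bsub>H\<^esub>) \<rparr>"

definition wr_emb :: "('b, 'c) monoid_scheme \<Rightarrow> ('h, 'd) monoid_scheme \<Rightarrow> 'h \<Rightarrow> ('h \<Rightarrow> 'b) \<times> 'h"
  where "wr_emb B H h = (\<lambda>x\<in>carrier H. \<one>\<^bsub>B\<^esub>, h)"

definition abar :: "('b, 'c) monoid_scheme \<Rightarrow> ('h, 'd) monoid_scheme \<Rightarrow> 'b \<Rightarrow> ('h \<Rightarrow> 'b) \<times> 'h"
  where "abar B H a = (\<lambda>x\<in>carrier H. if x = \<one>\<^bsub>H\<^esub> then a else \<one>\<^bsub>B\<^esub>, \<one>\<^bsub>H\<^esub>)"

definition bbar :: "('b, 'c) monoid_scheme \<Rightarrow> ('h, 'd) monoid_scheme \<Rightarrow> 'b \<Rightarrow> 'h set \<Rightarrow> ('h \<Rightarrow> 'b) \<times> 'h"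
  where "bbar B H b S = (\<lambda>x\<in>carrier H. if x \<in> S then b else \<one>\<^bsub>B\<^esub>, \<one>\<^bsub>H\<^esub>)"

definition Gsub :: "('b, 'c) monoid_scheme \<Rightarrow> ('h, 'd) monoid_scheme \<Rightarrow> 'b \<Rightarrow> 'b \<Rightarrow> 'h set
    \<Rightarrow> (('h \<Rightarrow> 'b) \<times> 'h) monoid"
  where "Gsub B H a b S = (wreath B H)\<lparr> carrier :=
     generate (wreath B H) (wr_emb B H ` carrier H \<union> {abar B H a, bbar B H b S}) \<rparr>"

definition Ymark :: "('b, 'c) monoid_scheme \<Rightarrow> ('h, 'd) monoid_scheme \<Rightarrow> 'h list \<Rightarrow> 'b \<Rightarrow> 'b \<Rightarrow> 'h set
    \<Rightarrow> (('h \<Rightarrow> 'b) \<times> 'h) list"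
  where "Ymark B H xs a b S = map (wr_emb B H) xs @ [abar B H a, bbar B H b S]"

fun cayley_ball :: "('g, 'e) monoid_scheme \<Rightarrow> 'g list \<Rightarrow> nat \<Rightarrow> 'g set" where
  "cayley_ball G A 0 = {\<one>\<^bsub>G\<^esub>}"
| "cayley_ball G A (Suc r) = cayley_ball G A r \<union>
     {u \<otimes>\<^bsub>G\<^esub> s | u s. u \<in> cayley_ball G A r \<and> (s \<in> set A \<or> s \<in> m_inv G ` set A)}"

definition marked_ball_iso ::
  "('g, 'e) monoid_scheme \<Rightarrow> 'g list \<Rightarrow> ('k, 'l) monoid_scheme \<Rightarrow> 'k list \<Rightarrow> nat \<Rightarrow> bool"
  where "marked_ball_iso G A G' A' r \<longleftrightarrow>
     length A = length A' \<and>
     (\<exists>\<phi>. bij_betw \<phi> (cayley_ball G A r) (cayley_ball G' A' r) \<and>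
          \<phi> \<one>\<^bsub>G\<^esub> = \<one>\<^bsub>G'\<^esub> \<and>
          (\<forall>u\<in>cayley_ball G A r. \<forall>v\<in>cayley_ball G A r. \<forall>i<length A.
              v = u \<otimes>\<^bsub>G\<^esub> (A ! i) \<longleftrightarrow> \<phi> v = \<phi> u \<otimes>\<^bsub>G'\<^esub> (A' ! i)))"

text \<open>2^H carries the product topology; the basic open sets are
  {S'. S' \<inter> F = T \<inter> F} for finite F \<subseteq> H.  S \<in> D_R(H) iff the orbit {Sh} meets every
  nonempty basic open set.\<close>
definition D_R :: "('h, 'd) monoid_scheme \<Rightarrow> 'h set set" where
  "D_R H = {S. S \<subseteq> carrier H \<and>
     (\<forall>T F. T \<subseteq> carrier H \<longrightarrow> finite F \<longrightarrow> F \<subseteq> carrier H \<longrightarrow>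
        (\<exists>h\<in>carrier H. (S #>\<^bsub>H\<^esub> h) \<inter> F = T \<inter> F))}"

end

theory Submission
  imports Defs
begin

text \<open>Evaluating a word of length at most \<open>N\<close> on the marking \<open>Y\<^sub>S\<close> gives an element
  \<open>(f, h)\<close> of \<open>B wr H\<close> whose \<open>H\<close>-coordinate does not depend on \<open>S\<close>, and whose lamp \<open>f x\<close>
  is determined by how \<open>x\<close> looks from the finitely many positions \<open>p\<close> visited by the word:
  whether \<open>p\<inverse> x = 1\<close> and whether \<open>p\<inverse> x \<in> S\<close>.  Let \<open>S, S'\<close> in \<open>D\<^sub>R(H)\<close> agree on the
  finite window \<open>P\<inverse> P\<close> of such positions.  Then every \<open>x\<close> has a counterpart \<open>x'\<close> that looks
  from \<open>P\<close> through \<open>S\<close> exactly as \<open>x\<close> does through \<open>S'\<close>: for \<open>x \<in> P\<close> take \<open>x' = x\<close>;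
  otherwise the dense orbit of \<open>S\<close> contains a translate \<open>S h\<close> with prescribed trace on \<open>P\<inverse>\<close>,
  and as \<open>H\<close> is infinite, \<open>h\<close> can be chosen outside \<open>P\<inverse>\<close>, so \<open>x' = h\<inverse>\<close> works.  Hence
  the same pairs of words of length at most \<open>r + 1\<close> are equal for \<open>Y\<^sub>S\<close> and for \<open>Y\<^bsub>S'\<^esub>\<close>,
  which yields the isomorphism of the balls of radius \<open>r\<close>.\<close>

section \<open>Words and balls in Cayley graphs\<close>

definition word_letter :: "('g, 'e) monoid_scheme \<Rightarrow> 'g list \<Rightarrow> nat \<times> bool \<Rightarrow> 'g" where
  "word_letter G A l = (if snd l then A ! fst l else inv\<^bsub>G\<^esub> (A ! fst l))"

definition word_eval :: "('g, 'e) monoid_scheme \<Rightarrow> 'g list \<Rightarrow> (nat \<times> bool) list \<Rightarrow> 'g" where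
  "word_eval G A w = foldl (\<lambda>u l. u \<otimes>\<^bsub>G\<^esub> word_letter G A l) \<one>\<^bsub>G\<^esub> w"

definition words :: "nat \<Rightarrow> nat \<Rightarrow> (nat \<times> bool) list set" where
  "words n r = {w. length w \<le> r \<and> (\<forall>l\<in>set w. fst l < n)}"

lemma word_eval_Nil [simp]: "word_eval G A [] = \<one>\<^bsub>G\<^esub>"
  by (simp add: word_eval_def)

lemma word_eval_snoc [simp]: "word_eval G A (w @ [l]) = word_eval G A w \<otimes>\<^bsub>G\<^esub> word_letter G A l"
  by (simp add: word_eval_def)

lemma finite_words: "finite (words n r)"
proof (rule finite_subset)
  show "words n r \<subseteq> {w. set w \<subseteq> {..<n} \<times> UNIV \<and> length w \<le> r}"
    by (auto simp: words_def)
qed (simp add: finite_lists_length_le)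

lemma words_mono: "r \<le> s \<Longrightarrow> words n r \<subseteq> words n s"
  by (auto simp: words_def)

lemma words_snoc: "w \<in> words n r \<Longrightarrow> i < n \<Longrightarrow> w @ [(i, e)] \<in> words n (Suc r)"
  by (auto simp: words_def)

lemma words_prefix: "u @ v \<in> words n r \<Longrightarrow> u \<in> words n r"
  by (auto simp: words_def)

lemma words_Suc:
  "words n (Suc r) = words n r \<union> {w @ [l] | w l. w \<in> words n r \<and> fst l < n}"
proof -
  have "w \<in> words n r \<or> (\<exists>v l. w = v @ [l] \<and> v \<in> words n r \<and> fst l < n)"
    if "w \<in> words n (Suc r)" for w
    using that by (cases w rule: rev_cases) (auto simp: words_def)
  then show ?thesis by (auto simp: words_def)
qed

lemma cayley_ball_eq_word_eval_image: "cayley_ball G A r = word_eval G A ` words (length A) r"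
proof (induction r)
  case 0
  then show ?case by (auto simp: words_def)
next
  case (Suc r)
  have letter: "s \<in> set A \<or> s \<in> m_inv G ` set A \<longleftrightarrow> (\<exists>l. fst l < length A \<and> s = word_letter G A l)"
    for s
  proof
    assume "s \<in> set A \<or> s \<in> m_inv G ` set A"
    then obtain i e where "i < length A" "s = (if e then A ! i else inv\<^bsub>G\<^esub> (A ! i))"
      by (metis imageE in_set_conv_nth)
    then show "\<exists>l. fst l < length A \<and> s = word_letter G A l"
      by (metis fst_conv snd_conv word_letter_def)
  qed (auto simp: word_letter_def)
  have "word_eval G A ` {w @ [l] | w l. w \<in> words (length A) r \<and> fst l < length A} =
      {u \<otimes>\<^bsub>G\<^esub> s | u s. u \<in> word_eval G A ` words (length A) r \<and>
                         (\<exists>l. fst l < length A \<and> s = word_letter G A l)}"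
    (is "?L = ?R")
  proof
    show "?L \<subseteq> ?R"
    proof
      fix x assume "x \<in> ?L"
      then obtain w l where "w \<in> words (length A) r" "fst l < length A"
        "x = word_eval G A w \<otimes>\<^bsub>G\<^esub> word_letter G A l" by auto
      then show "x \<in> ?R" by blast
    qed
    show "?R \<subseteq> ?L"
    proof
      fix x assume "x \<in> ?R"
      then obtain w l where "w \<in> words (length A) r" "fst l < length A"
        "x = word_eval G A w \<otimes>\<^bsub>G\<^esub> word_letter G A l" by blast
      then show "x \<in> ?L" by (metis (mono_tags, lifting) image_eqI mem_Collect_eq word_eval_snoc)
    qed
  qed
  then show ?case
    unfolding cayley_ball.simps words_Suc image_Un Suc.IH letter by simp
qed

lemma marked_ball_isoI_words:
  assumes len: "length A = length A'"
    and rel: "\<And>w v. w \<in> words (length A) (Suc r) \<Longrightarrow> v \<in> words (length A) (Suc r) \<Longrightarrow>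
        word_eval G A w = word_eval G A v \<longleftrightarrow> word_eval G' A' w = word_eval G' A' v"
  shows "marked_ball_iso G A G' A' r"
proof -
  let ?W = "words (length A) r"
  define \<phi> where "\<phi> u = word_eval G' A' (SOME w. w \<in> ?W \<and> word_eval G A w = u)" for u
  have \<phi>: "\<phi> (word_eval G A w) = word_eval G' A' w" if "w \<in> ?W" for w
  proof -
    let ?v = "SOME v. v \<in> ?W \<and> word_eval G A v = word_eval G A w"
    have "?v \<in> ?W \<and> word_eval G A ?v = word_eval G A w"
      by (rule someI[of _ w]) (use that in simp)
    then show ?thesis
      unfolding \<phi>_def using rel[of ?v w] that words_mono[of r "Suc r"] by auto
  qed
  have ball: "cayley_ball G A r = word_eval G A ` ?W" "cayley_ball G' A' r = word_eval G' A' ` ?W"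
    using cayley_ball_eq_word_eval_image len by metis+
  have "bij_betw \<phi> (cayley_ball G A r) (cayley_ball G' A' r)"
  proof (rule bij_betw_imageI)
    show "inj_on \<phi> (cayley_ball G A r)"
    proof (rule inj_onI)
      fix u v assume "u \<in> cayley_ball G A r" "v \<in> cayley_ball G A r" "\<phi> u = \<phi> v"
      then obtain w1 w2 where "w1 \<in> ?W" "w2 \<in> ?W" "u = word_eval G A w1" "v = word_eval G A w2"
        and "word_eval G' A' w1 = word_eval G' A' w2"
        using ball \<phi> by auto
      then show "u = v" using rel words_mono[of r "Suc r"] by auto
    qed
    show "\<phi> ` cayley_ball G A r = cayley_ball G' A' r"
      unfolding ball image_image by (simp add: \<phi> cong: image_cong)
  qed
  moreover have "\<phi> \<one>\<^bsub>G\<^esub> = \<one>\<^bsub>G'\<^esub>"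
    using \<phi>[of "[]"] by (simp add: words_def)
  moreover have "v = u \<otimes>\<^bsub>G\<^esub> A ! i \<longleftrightarrow> \<phi> v = \<phi> u \<otimes>\<^bsub>G'\<^esub> A' ! i"
    if uv: "u \<in> cayley_ball G A r" "v \<in> cayley_ball G A r" and i: "i < length A" for u v i
  proof -
    obtain w1 w2 where w: "w1 \<in> ?W" "w2 \<in> ?W" "u = word_eval G A w1" "v = word_eval G A w2"
      using uv ball by auto
    then have "w2 \<in> words (length A) (Suc r)" "w1 @ [(i, True)] \<in> words (length A) (Suc r)"
      using words_mono[of r "Suc r"] words_snoc i by auto
    then have "word_eval G A w2 = word_eval G A (w1 @ [(i, True)]) \<longleftrightarrow>
        word_eval G' A' w2 = word_eval G' A' (w1 @ [(i, True)])"
      by (rule rel)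
    then show ?thesis
      using w \<phi> by (simp add: word_letter_def)
  qed
  ultimately show ?thesis
    unfolding marked_ball_iso_def using len by blast
qed

lemma (in group) word_eval_closed:
  assumes "set A \<subseteq> carrier G" "\<forall>l\<in>set w. fst l < length A"
  shows "word_eval G A w \<in> carrier G"
  using assms(2)
proof (induction w rule: rev_induct)
  case (snoc l w)
  then have "A ! fst l \<in> carrier G" using assms(1) by auto
  then show ?case using snoc by (simp add: word_letter_def)
qed simp

lemma (in group) word_eval_subgroup:
  assumes "subgroup K G" "set A \<subseteq> K" "\<forall>l\<in>set w. fst l < length A"
  shows "word_eval (G\<lparr>carrier := K\<rparr>) A w = word_eval G A w"
  unfolding word_eval_def
proof (rule foldl_cong)
  fix u l assume "l \<in> set w"
  then have "A ! fst l \<in> K" using assms(2,3) by auto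
  then show "u \<otimes>\<^bsub>G\<lparr>carrier := K\<rparr>\<^esub> word_letter (G\<lparr>carrier := K\<rparr>) A l = u \<otimes> word_letter G A l"
    using assms(1) by (simp add: word_letter_def)
qed simp_all

section \<open>Sets with a dense right orbit\<close>

lemma (in group) r_coset_mem_iff:
  assumes "S \<subseteq> carrier G" "q \<in> carrier G" "h \<in> carrier G"
  shows "q \<in> S #> h \<longleftrightarrow> q \<otimes> inv h \<in> S"
proof
  assume "q \<in> S #> h"
  then show "q \<otimes> inv h \<in> S"
    using assms by (auto simp: r_coset_def m_assoc subsetD)
next
  assume "q \<otimes> inv h \<in> S"
  moreover have "q = q \<otimes> inv h \<otimes> h" using assms by (simp add: m_assoc)
  ultimately show "q \<in> S #> h" by (auto simp: r_coset_def)
qed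

lemma (in group) D_R_translate_avoiding:
  assumes S: "S \<in> D_R G" and inf: "infinite (carrier G)"
    and T: "T \<subseteq> carrier G" and F: "finite F" "F \<subseteq> carrier G" and K: "finite K"
  shows "\<exists>h \<in> carrier G - K. (S #> h) \<inter> F = T \<inter> F"
proof -
  have "infinite (carrier G - F)" using inf F by simp
  then obtain E where E: "finite E" "card E = card K" "E \<subseteq> carrier G - F"
    using infinite_arbitrarily_large by blast
  obtain g where g: "g ` K \<subseteq> E" "inj_on g K"
    using card_le_inj[OF K \<open>finite E\<close>] E by auto
  \<comment> \<open>Prescribing at \<open>g k\<close> the opposite of membership in \<open>S #> k\<close> rules out \<open>h = k\<close>.\<close>
  define U where "U = {g k | k. k \<in> K \<and> g k \<notin> S #> k}"
  have dense: "\<forall>T F. T \<subseteq> carrier G \<longrightarrow> finite F \<longrightarrow> F \<subseteq> carrier G \<longrightarrow>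
      (\<exists>h\<in>carrier G. (S #> h) \<inter> F = T \<inter> F)"
    using S by (simp add: D_R_def)
  have "U \<subseteq> E" using g by (auto simp: U_def)
  then have sets: "(T \<inter> F) \<union> U \<subseteq> carrier G" "finite (F \<union> E)" "F \<union> E \<subseteq> carrier G"
    using T F E by auto
  obtain h where h: "h \<in> carrier G" "(S #> h) \<inter> (F \<union> E) = ((T \<inter> F) \<union> U) \<inter> (F \<union> E)"
    using dense[rule_format, OF sets] by blast
  have "h \<notin> K"
  proof
    assume "h \<in> K"
    then have "g h \<in> E" using g by auto
    then have "g h \<in> S #> h \<longleftrightarrow> g h \<in> U" using h(2) E(3) by blast
    also have "\<dots> \<longleftrightarrow> g h \<notin> S #> h"
      using \<open>h \<in> K\<close> g(2) by (auto simp: U_def dest: inj_onD)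
    finally show False by blast
  qed
  moreover have "(S #> h) \<inter> F = T \<inter> F"
    using h(2) \<open>U \<subseteq> E\<close> E(3) by blast
  ultimately show ?thesis using h(1) by blast
qed

definition local_view :: "('g, 'e) monoid_scheme \<Rightarrow> 'g set \<Rightarrow> 'g \<Rightarrow> 'g \<Rightarrow> bool \<times> bool" where
  "local_view G S x p = (inv\<^bsub>G\<^esub> p \<otimes>\<^bsub>G\<^esub> x = \<one>\<^bsub>G\<^esub>, inv\<^bsub>G\<^esub> p \<otimes>\<^bsub>G\<^esub> x \<in> S)"

lemma (in group) D_R_imitate_local_view:
  assumes S: "S \<in> D_R G" and inf: "infinite (carrier G)"
    and P: "finite P" "P \<subseteq> carrier G" and x: "x \<in> carrier G"
    and agree: "\<forall>p\<in>P. \<forall>q\<in>P. inv p \<otimes> q \<in> S \<longleftrightarrow> inv p \<otimes> q \<in> S'"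
  shows "\<exists>x' \<in> carrier G. \<forall>p\<in>P. local_view G S x' p = local_view G S' x p"
proof (cases "x \<in> P")
  case True
  then show ?thesis using x agree by (auto simp: local_view_def)
next
  case False
  define T where "T = {q \<in> carrier G. q \<otimes> x \<in> S'}"
  have T: "T \<subseteq> carrier G" and P': "finite (m_inv G ` P)" "m_inv G ` P \<subseteq> carrier G"
    using P by (auto simp: T_def)
  obtain h where h: "h \<in> carrier G" "h \<notin> m_inv G ` P" "(S #> h) \<inter> m_inv G ` P = T \<inter> m_inv G ` P"
    using D_R_translate_avoiding[OF S inf T P' P'(1)] by blast
  have "local_view G S (inv h) p = local_view G S' x p" if p: "p \<in> P" for p
  proof -
    have pc: "p \<in> carrier G" using p P by auto
    have "inv p \<otimes> inv h \<noteq> \<one>"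
    proof
      assume "inv p \<otimes> inv h = \<one>"
      then have "inv h = p" using inv_solve_left'[of \<one> p "inv h"] pc h(1) by simp
      then have "h = inv p" using h(1) inv_inv by metis
      then show False using h(2) p by blast
    qed
    moreover have "inv p \<otimes> x \<noteq> \<one>"
      using inv_solve_left'[of \<one> p x] pc x False p by auto
    moreover have "inv p \<otimes> inv h \<in> S \<longleftrightarrow> inv p \<otimes> x \<in> S'"
    proof -
      have "inv p \<otimes> inv h \<in> S \<longleftrightarrow> inv p \<in> S #> h"
        using r_coset_mem_iff[OF _ _ h(1)] S pc by (simp add: D_R_def)
      also have "\<dots> \<longleftrightarrow> inv p \<in> T" using h(3) p by blast
      finally show ?thesis using pc by (simp add: T_def)
    qed
    ultimately show ?thesis by (simp add: local_view_def)
  qed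
  then show ?thesis using h(1) by (intro bexI[of _ "inv h"] ballI) simp_all
qed

section \<open>Wreath products\<close>

locale wreath_product = B: group B + H: group H
  for B :: "('b, 'c) monoid_scheme" and H :: "('h, 'd) monoid_scheme"
begin

abbreviation W :: "(('h \<Rightarrow> 'b) \<times> 'h) monoid" where "W \<equiv> wreath B H"

lemma wreath_carrier: "carrier W = (carrier H \<rightarrow>\<^sub>E carrier B) \<times> carrier H"
  by (simp add: wreath_def)

lemma wreath_mult:
  "x \<otimes>\<^bsub>W\<^esub> y = (\<lambda>z\<in>carrier H. fst x z \<otimes>\<^bsub>B\<^esub> fst y (inv\<^bsub>H\<^esub> snd x \<otimes>\<^bsub>H\<^esub> z), snd x \<otimes>\<^bsub>H\<^esub> snd y)"
  by (simp add: wreath_def case_prod_beta)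

lemma wreath_one: "\<one>\<^bsub>W\<^esub> = (\<lambda>z\<in>carrier H. \<one>\<^bsub>B\<^esub>, \<one>\<^bsub>H\<^esub>)"
  by (simp add: wreath_def)

lemma wreath_group: "group W"
proof (rule groupI)
  fix x y assume "x \<in> carrier W" "y \<in> carrier W"
  then show "x \<otimes>\<^bsub>W\<^esub> y \<in> carrier W"
    by (auto simp: wreath_carrier wreath_mult PiE_def Pi_def)
next
  show "\<one>\<^bsub>W\<^esub> \<in> carrier W" by (auto simp: wreath_carrier wreath_one)
next
  fix x y z assume "x \<in> carrier W" "y \<in> carrier W" "z \<in> carrier W"
  then show "x \<otimes>\<^bsub>W\<^esub> y \<otimes>\<^bsub>W\<^esub> z = x \<otimes>\<^bsub>W\<^esub> (y \<otimes>\<^bsub>W\<^esub> z)"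
    by (auto simp: wreath_carrier wreath_mult PiE_def Pi_def H.m_assoc B.m_assoc H.inv_mult_group
        intro!: restrict_ext)
next
  fix x assume "x \<in> carrier W"
  then show "\<one>\<^bsub>W\<^esub> \<otimes>\<^bsub>W\<^esub> x = x"
    by (auto simp: wreath_carrier wreath_mult wreath_one PiE_def Pi_def extensional_def)
next
  fix x assume "x \<in> carrier W"
  then obtain f h where x: "x = (f, h)" "f \<in> carrier H \<rightarrow>\<^sub>E carrier B" "h \<in> carrier H"
    by (auto simp: wreath_carrier)
  let ?y = "(\<lambda>z\<in>carrier H. inv\<^bsub>B\<^esub> f (h \<otimes>\<^bsub>H\<^esub> z), inv\<^bsub>H\<^esub> h)"
  have "?y \<in> carrier W \<and> ?y \<otimes>\<^bsub>W\<^esub> x = \<one>\<^bsub>W\<^esub>"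
    using x by (auto simp: wreath_carrier wreath_mult wreath_one PiE_def Pi_def intro!: restrict_ext)
  then show "\<exists>y\<in>carrier W. y \<otimes>\<^bsub>W\<^esub> x = \<one>\<^bsub>W\<^esub>" by blast
qed

lemma wreath_inv:
  assumes "f \<in> carrier H \<rightarrow>\<^sub>E carrier B" "h \<in> carrier H"
  shows "inv\<^bsub>W\<^esub> (f, h) = (\<lambda>z\<in>carrier H. inv\<^bsub>B\<^esub> f (h \<otimes>\<^bsub>H\<^esub> z), inv\<^bsub>H\<^esub> h)"
proof (rule group.inv_equality[OF wreath_group])
  show "(\<lambda>z\<in>carrier H. inv\<^bsub>B\<^esub> f (h \<otimes>\<^bsub>H\<^esub> z), inv\<^bsub>H\<^esub> h) \<otimes>\<^bsub>W\<^esub> (f, h) = \<one>\<^bsub>W\<^esub>"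
    using assms by (auto simp: wreath_mult wreath_one PiE_def Pi_def)
qed (use assms in \<open>auto simp: wreath_carrier PiE_def Pi_def\<close>)

definition walk :: "('l \<Rightarrow> 'h) \<Rightarrow> 'l list \<Rightarrow> 'h" where
  "walk s w = foldl (\<lambda>p l. p \<otimes>\<^bsub>H\<^esub> s l) \<one>\<^bsub>H\<^esub> w"

lemma walk_Nil [simp]: "walk s [] = \<one>\<^bsub>H\<^esub>"
  by (simp add: walk_def)

lemma walk_snoc [simp]: "walk s (w @ [l]) = walk s w \<otimes>\<^bsub>H\<^esub> s l"
  by (simp add: walk_def)

lemma walk_closed: "(\<And>l. s l \<in> carrier H) \<Longrightarrow> walk s w \<in> carrier H"
  by (induction w rule: rev_induct) simp_all

lemma wreath_foldl_snd: "snd (foldl (\<lambda>u l. u \<otimes>\<^bsub>W\<^esub> (c l, s l)) \<one>\<^bsub>W\<^esub> w) = walk s w"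
  by (induction w rule: rev_induct) (simp_all add: wreath_mult wreath_one)

lemma wreath_foldl_fst_eq:
  assumes x: "x \<in> carrier H" "x' \<in> carrier H"
    and lamps: "\<And>u l v. w = u @ l # v \<Longrightarrow>
        c l (inv\<^bsub>H\<^esub> walk s u \<otimes>\<^bsub>H\<^esub> x) = c' l (inv\<^bsub>H\<^esub> walk s u \<otimes>\<^bsub>H\<^esub> x')"
  shows "fst (foldl (\<lambda>u l. u \<otimes>\<^bsub>W\<^esub> (c l, s l)) \<one>\<^bsub>W\<^esub> w) x =
         fst (foldl (\<lambda>u l. u \<otimes>\<^bsub>W\<^esub> (c' l, s l)) \<one>\<^bsub>W\<^esub> w) x'"
  using lamps
proof (induction w rule: rev_induct)
  case Nil
  then show ?case using x by (simp add: wreath_one)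
next
  case (snoc l w)
  have "fst (foldl (\<lambda>u l. u \<otimes>\<^bsub>W\<^esub> (c l, s l)) \<one>\<^bsub>W\<^esub> w) x =
        fst (foldl (\<lambda>u l. u \<otimes>\<^bsub>W\<^esub> (c' l, s l)) \<one>\<^bsub>W\<^esub> w) x'"
    by (rule snoc.IH, rule snoc.prems) simp
  moreover have "c l (inv\<^bsub>H\<^esub> walk s w \<otimes>\<^bsub>H\<^esub> x) = c' l (inv\<^bsub>H\<^esub> walk s w \<otimes>\<^bsub>H\<^esub> x')"
    using snoc.prems[of w l "[]"] by simp
  ultimately show ?case
    using x by (simp add: wreath_mult[of "foldl _ _ w"] wreath_foldl_snd)
qed

end

section \<open>The marked groups \<open>(G\<^sub>S, Y\<^sub>S)\<close>\<close>

locale wreath_marking = wreath_product B H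
  for B :: "('b, 'c) monoid_scheme" and H :: "('h, 'd) monoid_scheme" +
  fixes xs :: "'h list" and a b :: 'b
  assumes xs_carrier: "set xs \<subseteq> carrier H"
    and a_carrier: "a \<in> carrier B" and b_carrier: "b \<in> carrier B"
begin

abbreviation Y :: "'h set \<Rightarrow> (('h \<Rightarrow> 'b) \<times> 'h) list" where "Y S \<equiv> Ymark B H xs a b S"

definition letter_shift :: "nat \<times> bool \<Rightarrow> 'h" where
  "letter_shift l = (if fst l < length xs then word_letter H xs l else \<one>\<^bsub>H\<^esub>)"

definition letter_lamp :: "'h set \<Rightarrow> nat \<times> bool \<Rightarrow> 'h \<Rightarrow> 'b" where
  "letter_lamp S l y =
     (if fst l = length xs \<and> y = \<one>\<^bsub>H\<^esub> then (if snd l then a else inv\<^bsub>B\<^esub> a)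
      else if fst l = Suc (length xs) \<and> y \<in> S then (if snd l then b else inv\<^bsub>B\<^esub> b)
      else \<one>\<^bsub>B\<^esub>)"

lemma letter_shift_closed: "letter_shift l \<in> carrier H"
proof -
  have "fst l < length xs \<Longrightarrow> xs ! fst l \<in> carrier H" using xs_carrier nth_mem by blast
  then show ?thesis by (simp add: letter_shift_def word_letter_def)
qed

lemma length_Y [simp]: "length (Y S) = length xs + 2"
  by (simp add: Ymark_def)

lemma word_letter_Y:
  assumes "fst l < length xs + 2"
  shows "word_letter W (Y S) l = (\<lambda>y\<in>carrier H. letter_lamp S l y, letter_shift l)"
proof -
  obtain i e where l: "l = (i, e)" by fastforce
  consider "i < length xs" | "i = length xs" | "i = Suc (length xs)"
    using assms l by fastforce
  then show ?thesis
  proof cases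
    case 1
    then have "xs ! i \<in> carrier H" using xs_carrier by auto
    then show ?thesis using 1
      by (auto simp: l Ymark_def nth_append word_letter_def wr_emb_def wreath_inv letter_lamp_def
          letter_shift_def)
  next
    case 2
    then show ?thesis using a_carrier
      by (auto simp: l Ymark_def nth_append word_letter_def abar_def wreath_inv letter_lamp_def
          letter_shift_def PiE_def Pi_def)
  next
    case 3
    then show ?thesis using b_carrier
      by (auto simp: l Ymark_def nth_append word_letter_def bbar_def wreath_inv letter_lamp_def
          letter_shift_def PiE_def Pi_def)
  qed
qed

lemma word_eval_Y:
  "\<forall>l\<in>set w. fst l < length xs + 2 \<Longrightarrow>
    word_eval W (Y S) w = foldl (\<lambda>u l. u \<otimes>\<^bsub>W\<^esub> (\<lambda>y\<in>carrier H. letter_lamp S l y, letter_shift l)) \<one>\<^bsub>W\<^esub> w"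
  unfolding word_eval_def by (rule foldl_cong) (simp_all add: word_letter_Y)

lemma snd_word_eval_Y:
  "\<forall>l\<in>set w. fst l < length xs + 2 \<Longrightarrow> snd (word_eval W (Y S) w) = walk letter_shift w"
  by (simp add: word_eval_Y wreath_foldl_snd)

lemma Y_subset_carrier: "set (Y S) \<subseteq> carrier W"
  using xs_carrier a_carrier b_carrier
  by (auto simp: Ymark_def wreath_carrier wr_emb_def abar_def bbar_def)

definition positions :: "nat \<Rightarrow> 'h set" where
  "positions N = walk letter_shift ` words (length xs + 2) N"

definition window :: "nat \<Rightarrow> 'h set" where
  "window N = (\<lambda>(p, q). inv\<^bsub>H\<^esub> p \<otimes>\<^bsub>H\<^esub> q) ` (positions N \<times> positions N)"

lemma finite_positions: "finite (positions N)"
  by (simp add: positions_def finite_words)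

lemma positions_subset_carrier: "positions N \<subseteq> carrier H"
  by (auto simp: positions_def intro: walk_closed letter_shift_closed)

lemma finite_window: "finite (window N)"
  by (simp add: window_def finite_positions)

lemma window_subset_carrier: "window N \<subseteq> carrier H"
  using positions_subset_carrier by (auto simp: window_def)

lemma fst_word_eval_Y_eq:
  assumes w: "w \<in> words (length xs + 2) N" and x: "x \<in> carrier H" "x' \<in> carrier H"
    and view: "\<forall>p\<in>positions N. local_view H S x p = local_view H S' x' p"
  shows "fst (word_eval W (Y S) w) x = fst (word_eval W (Y S') w) x'"
proof -
  have "fst (foldl (\<lambda>u l. u \<otimes>\<^bsub>W\<^esub> (\<lambda>y\<in>carrier H. letter_lamp S l y, letter_shift l)) \<one>\<^bsub>W\<^esub> w) x =
        fst (foldl (\<lambda>u l. u \<otimes>\<^bsub>W\<^esub> (\<lambda>y\<in>carrier H. letter_lamp S' l y, letter_shift l)) \<one>\<^bsub>W\<^esub> w) x'"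
  proof (rule wreath_foldl_fst_eq[OF x])
    fix u l v assume "w = u @ l # v"
    then have p: "walk letter_shift u \<in> positions N"
      using w words_prefix unfolding positions_def by blast
    then have "walk letter_shift u \<in> carrier H"
      and "local_view H S x (walk letter_shift u) = local_view H S' x' (walk letter_shift u)"
      using positions_subset_carrier view by blast+
    then show "(\<lambda>y\<in>carrier H. letter_lamp S l y) (inv\<^bsub>H\<^esub> walk letter_shift u \<otimes>\<^bsub>H\<^esub> x) =
        (\<lambda>y\<in>carrier H. letter_lamp S' l y) (inv\<^bsub>H\<^esub> walk letter_shift u \<otimes>\<^bsub>H\<^esub> x')"
      using x by (simp add: local_view_def letter_lamp_def)
  qed
  then show ?thesis using w by (simp add: word_eval_Y words_def)
qed

lemma word_eval_Y_eq_transfer: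
  assumes inf: "infinite (carrier H)" and S: "S \<in> D_R H"
    and agree: "S \<inter> window N = S' \<inter> window N"
    and w: "w \<in> words (length xs + 2) N" and v: "v \<in> words (length xs + 2) N"
    and eq: "word_eval W (Y S) w = word_eval W (Y S) v"
  shows "word_eval W (Y S') w = word_eval W (Y S') v"
proof -
  have agree': "\<forall>p\<in>positions N. \<forall>q\<in>positions N. inv\<^bsub>H\<^esub> p \<otimes>\<^bsub>H\<^esub> q \<in> S \<longleftrightarrow> inv\<^bsub>H\<^esub> p \<otimes>\<^bsub>H\<^esub> q \<in> S'"
  proof (intro ballI)
    fix p q assume "p \<in> positions N" "q \<in> positions N"
    then have "inv\<^bsub>H\<^esub> p \<otimes>\<^bsub>H\<^esub> q \<in> window N"
      unfolding window_def by (intro image_eqI[where x = "(p, q)"]) simp_all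
    then show "inv\<^bsub>H\<^esub> p \<otimes>\<^bsub>H\<^esub> q \<in> S \<longleftrightarrow> inv\<^bsub>H\<^esub> p \<otimes>\<^bsub>H\<^esub> q \<in> S'"
      using agree by (metis Int_iff)
  qed
  have lamps: "fst (word_eval W (Y S') w) x = fst (word_eval W (Y S') v) x" if x: "x \<in> carrier H" for x
  proof -
    obtain x' where x': "x' \<in> carrier H" "\<forall>p\<in>positions N. local_view H S x' p = local_view H S' x p"
      using H.D_R_imitate_local_view[OF S inf finite_positions positions_subset_carrier x agree']
      by blast
    have "fst (word_eval W (Y S') u) x = fst (word_eval W (Y S) u) x'"
      if "u \<in> words (length xs + 2) N" for u
      using fst_word_eval_Y_eq[OF that x x'(1)] x'(2) by simp
    from this[OF w] this[OF v] show ?thesis using eq by simp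
  qed
  have shifts: "snd (word_eval W (Y S') u) = snd (word_eval W (Y S) u)"
    if "u \<in> words (length xs + 2) N" for u
    using that by (simp add: snd_word_eval_Y words_def)
  have closed: "word_eval W (Y S') u \<in> carrier W" if "u \<in> words (length xs + 2) N" for u
    using group.word_eval_closed[OF wreath_group Y_subset_carrier] that by (simp add: words_def)
  have "fst (word_eval W (Y S') u) \<in> carrier H \<rightarrow>\<^sub>E carrier B"
    if "u \<in> words (length xs + 2) N" for u
    using closed[OF that] by (simp add: wreath_carrier mem_Times_iff)
  then have "fst (word_eval W (Y S') w) = fst (word_eval W (Y S') v)"
    using w v lamps by (intro PiE_ext)
  moreover have "snd (word_eval W (Y S') w) = snd (word_eval W (Y S') v)"
    using shifts[OF w] shifts[OF v] eq by simp
  ultimately show ?thesis by (simp add: prod_eq_iff)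
qed

lemma word_eval_Gsub:
  assumes "\<forall>l\<in>set w. fst l < length xs + 2"
  shows "word_eval (Gsub B H a b S) (Y S) w = word_eval W (Y S) w"
proof -
  let ?gens = "wr_emb B H ` carrier H \<union> {abar B H a, bbar B H b S}"
  have "?gens \<subseteq> carrier W"
    using a_carrier b_carrier by (auto simp: wreath_carrier wr_emb_def abar_def bbar_def)
  then have "subgroup (generate W ?gens) W"
    by (rule group.generate_is_subgroup[OF wreath_group])
  moreover have "set (Y S) \<subseteq> generate W ?gens"
    using xs_carrier by (auto simp: Ymark_def intro: generate.incl)
  ultimately show ?thesis
    unfolding Gsub_def using group.word_eval_subgroup[OF wreath_group] assms by simp
qed

lemma marked_ball_iso_if_agree_on_window:
  assumes inf: "infinite (carrier H)" and S: "S \<in> D_R H" and S': "S' \<in> D_R H"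
    and agree: "S' \<inter> window (Suc r) = S \<inter> window (Suc r)"
  shows "marked_ball_iso (Gsub B H a b S') (Y S') (Gsub B H a b S) (Y S) r"
proof (rule marked_ball_isoI_words)
  fix w v assume "w \<in> words (length (Y S')) (Suc r)" "v \<in> words (length (Y S')) (Suc r)"
  then have wv: "w \<in> words (length xs + 2) (Suc r)" "v \<in> words (length xs + 2) (Suc r)"
    by simp_all
  then show "word_eval (Gsub B H a b S') (Y S') w = word_eval (Gsub B H a b S') (Y S') v \<longleftrightarrow>
      word_eval (Gsub B H a b S) (Y S) w = word_eval (Gsub B H a b S) (Y S) v"
    using word_eval_Y_eq_transfer[OF inf S' agree wv] word_eval_Y_eq_transfer[OF inf S agree[symmetric] wv]
    by (auto simp: word_eval_Gsub words_def)
qed simp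

end

theorem corollary3p6:
  fixes B :: "('b, 'c) monoid_scheme" and H :: "('h, 'd) monoid_scheme"
    and xs :: "'h list" and a b :: 'b
  assumes "group B" and "group H"
    and "\<not> comm_group B"
    and "set xs \<subseteq> carrier H" and "generate H (set xs) = carrier H"
    and "infinite (carrier H)"
    and "a \<in> carrier B" and "b \<in> carrier B" and "a \<otimes>\<^bsub>B\<^esub> b \<noteq> b \<otimes>\<^bsub>B\<^esub> a"
  shows "\<forall>S\<in>D_R H. \<forall>r::nat. \<exists>F. finite F \<and> F \<subseteq> carrier H \<and>
           (\<forall>S'\<in>D_R H. S' \<inter> F = S \<inter> F \<longrightarrow>
              marked_ball_iso (Gsub B H a b S') (Ymark B H xs a b S')
                              (Gsub B H a b S) (Ymark B H xs a b S) r)"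
proof -
  interpret wreath_marking B H xs a b
    by (intro wreath_marking.intro wreath_product.intro wreath_marking_axioms.intro assms)
  show ?thesis
  proof (intro ballI allI exI conjI impI)
    fix r
    show "finite (window (Suc r))" by (rule finite_window)
  next
    fix r
    show "window (Suc r) \<subseteq> carrier H" by (rule window_subset_carrier)
  next
    fix S r S'
    assume "S \<in> D_R H" "S' \<in> D_R H" "S' \<inter> window (Suc r) = S \<inter> window (Suc r)"
    then show "marked_ball_iso (Gsub B H a b S') (Y S') (Gsub B H a b S) (Y S) r"
      by (rule marked_ball_iso_if_agree_on_window[OF assms(6)])
  qed
qed

end
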